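(* Let $\mathbb{F}$ be a field of characteristic $\ne2$ and let $M$ be a fully symmetric $n^d\times n^d$ matrix over $\mathbb{F}$. Then $\mathrm{PT\text{-}rank}(M)\le 2^{d-1}\,\mathrm{SoS}(Q_M)$.
   Context: Rows and columns are indexed by $[n]^d$. For $k\in[d]$, $M^{\top_k}$ swaps the $k$-th row index with the $k$-th column index; $M^{\top_\kappa}$ composes these over $k\in\kappa$. $M$ is fully symmetric if $M^{\top_k}=M$ for all $k\in[d]$. $M$ is PT-basic if $\mathrm{rank}(M^{\top_\kappa})=1$ for some $\kappa\subseteq[d]$; $\mathrm{PT\text{-}rank}(M)$ is the least number of PT-basic matrices summing to $M$. $Q_M=\sum_{\vec i,\vec j\in[n]^d}M_{\vec i,\vec j}X^{(1)}_{i_1}X^{(1)}_{j_1}\cdots X^{(d)}_{i_d}X^{(d)}_{j_d}$ is a commutative polynomial in $d$ blocks of $n$ variables. $\mathrm{SoS}(f)$ is the least $s$ such that $f=g_1^2+\cdots+g_s^2$ with each $g_i$ a $d$-multilinear form over $\mathbb{F}$ (each monomial of $g_i$ has exactly one variable from each block), and $\infty$ if none exists. *)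

theory Defs
  imports Main "HOL-Library.Poly_Mapping" "HOL-Library.Function_Algebras" "HOL-Library.Extended_Nat"
begin

text \<open>Multi-indices in [n]^d, represented as lists of length d with entries < n
  (entries are 0-based, i.e. [n] = {0..<n}; blocks are also 0-based: k < d).\<close>
definition idx :: "nat \<Rightarrow> nat \<Rightarrow> nat list set" where
  "idx n d = {xs. length xs = d \<and> set xs \<subseteq> {..<n}}"

text \<open>A matrix with rows and columns indexed by [n]^d; only entries with
  indices in idx n d are relevant.\<close>
type_synonym 'a tmat = "nat list \<Rightarrow> nat list \<Rightarrow> 'a"

definition ptrans :: "nat set \<Rightarrow> 'a tmat \<Rightarrow> 'a tmat" where
  "ptrans \<kappa> M = (\<lambda>i j.
     M (map (\<lambda>k. if k \<in> \<kappa> then j ! k else i ! k) [0..<length i])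
       (map (\<lambda>k. if k \<in> \<kappa> then i ! k else j ! k) [0..<length j]))"

definition fully_symmetric :: "nat \<Rightarrow> nat \<Rightarrow> 'a tmat \<Rightarrow> bool" where
  "fully_symmetric n d M \<longleftrightarrow>
     (\<forall>k<d. \<forall>i\<in>idx n d. \<forall>j\<in>idx n d. ptrans {k} M i j = M i j)"

definition fscale :: "'a::field \<Rightarrow> ('b \<Rightarrow> 'a) \<Rightarrow> ('b \<Rightarrow> 'a)" where
  "fscale c f = (\<lambda>x. c * f x)"

lemma vector_space_fscale: "vector_space (fscale :: 'a::field \<Rightarrow> ('b \<Rightarrow> 'a) \<Rightarrow> _)"
  by unfold_locales (auto simp: fscale_def fun_eq_iff algebra_simps)

definition mrank :: "nat \<Rightarrow> nat \<Rightarrow> 'a::field tmat \<Rightarrow> nat" where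
  "mrank n d M = vector_space.dim (fscale :: 'a \<Rightarrow> (nat list \<Rightarrow> 'a) \<Rightarrow> _)
     ((\<lambda>j. (\<lambda>i. if i \<in> idx n d then M i j else 0)) ` idx n d)"

definition PT_basic :: "nat \<Rightarrow> nat \<Rightarrow> 'a::field tmat \<Rightarrow> bool" where
  "PT_basic n d M \<longleftrightarrow> (\<exists>\<kappa>\<subseteq>{..<d}. mrank n d (ptrans \<kappa> M) = 1)"

definition PT_rank :: "nat \<Rightarrow> nat \<Rightarrow> 'a::field tmat \<Rightarrow> enat" where
  "PT_rank n d M = Inf {enat r | r. \<exists>B :: nat \<Rightarrow> 'a tmat.
     (\<forall>t<r. PT_basic n d (B t)) \<and>
     (\<forall>i\<in>idx n d. \<forall>j\<in>idx n d. M i j = (\<Sum>t<r. B t i j))}"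

text \<open>Commutative polynomials in the variables X^(k)_i, encoded as (k, i), as
  finitely supported maps from monomials (finitely supported exponent maps) to coefficients.\<close>
type_synonym 'a mpoly = "((nat \<times> nat) \<Rightarrow>\<^sub>0 nat) \<Rightarrow>\<^sub>0 'a"

definition Var :: "nat \<Rightarrow> nat \<Rightarrow> 'a::comm_ring_1 mpoly" where
  "Var k i = Poly_Mapping.single (Poly_Mapping.single (k, i) 1) 1"

definition Const :: "'a::comm_ring_1 \<Rightarrow> 'a mpoly" where
  "Const c = Poly_Mapping.single 0 c"

definition QM :: "nat \<Rightarrow> nat \<Rightarrow> 'a::comm_ring_1 tmat \<Rightarrow> 'a mpoly" where
  "QM n d M = (\<Sum>i\<in>idx n d. \<Sum>j\<in>idx n d.
      Const (M i j) * (\<Prod>k<d. Var k (i ! k) * Var k (j ! k)))"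

definition multilinear_form :: "nat \<Rightarrow> nat \<Rightarrow> 'a::comm_ring_1 mpoly \<Rightarrow> bool" where
  "multilinear_form n d g \<longleftrightarrow>
     (\<exists>c :: nat list \<Rightarrow> 'a. g = (\<Sum>i\<in>idx n d. Const (c i) * (\<Prod>k<d. Var k (i ! k))))"

definition SoS :: "nat \<Rightarrow> nat \<Rightarrow> 'a::comm_ring_1 mpoly \<Rightarrow> enat" where
  "SoS n d f = Inf {enat s | s. \<exists>g :: nat \<Rightarrow> 'a mpoly.
     (\<forall>t<s. multilinear_form n d (g t)) \<and> f = (\<Sum>t<s. (g t)\<^sup>2)}"

end

theory Submission
  imports Defs
begin

text \<open>
  Write Q_M = g_1^2 + ... + g_s^2 with g_t = sum_i c_t(i) X_i. Then Q_M = Q_N, where N is the sum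
  of the symmetric rank-one matrices C_t = c_t c_t^T. For fully symmetric S, the coefficient of
  the monomial X_i X_j in Q_S is 2^m S_ij, with m the number of blocks in which i and j differ,
  because the index pairs producing that monomial are exactly the partial transposes of (i, j).
  Hence in characteristic not 2 the map S -> Q_S is injective on fully symmetric matrices, and,
  Q being invariant under partial transposition, 2^d M is the sum of all partial transposes of N.
  For symmetric C_t the partial transposes over a block set and over its complement agree, so
  M = 2^(1-d) sum_t sum_kappa C_t^(T_kappa), kappa ranging over the block sets avoiding block 0:
  a sum of 2^(d-1) s matrices, each PT-basic or zero.
\<close>

definition swap_blocks :: "nat set \<Rightarrow> nat list \<Rightarrow> nat list \<Rightarrow> nat list" where
  "swap_blocks K i j = map (\<lambda>k. if k \<in> K then j ! k else i ! k) [0..<length i]"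

lemma ptrans_conv_swap_blocks: "ptrans K M i j = M (swap_blocks K i j) (swap_blocks K j i)"
  by (simp add: ptrans_def swap_blocks_def)

lemma length_swap_blocks [simp]: "length (swap_blocks K i j) = length i"
  by (simp add: swap_blocks_def)

lemma nth_swap_blocks [simp]:
  "k < length i \<Longrightarrow> swap_blocks K i j ! k = (if k \<in> K then j ! k else i ! k)"
  by (simp add: swap_blocks_def)

lemma length_idx: "i \<in> idx n d \<Longrightarrow> length i = d"
  by (simp add: idx_def)

lemma finite_idx: "finite (idx n d)"
  using finite_lists_length_eq[of "{..<n}" d] by (simp add: idx_def conj_commute)

lemma set_swap_blocks: "length i = length j \<Longrightarrow> set (swap_blocks K i j) \<subseteq> set i \<union> set j"
  by (auto simp: swap_blocks_def)

lemma swap_blocks_in_idx: "i \<in> idx n d \<Longrightarrow> j \<in> idx n d \<Longrightarrow> swap_blocks K i j \<in> idx n d"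
  using set_swap_blocks[of i j K] by (auto simp: idx_def)

lemma swap_blocks_swap_blocks:
  "length i = length j \<Longrightarrow>
     swap_blocks L (swap_blocks K i j) (swap_blocks K j i) = swap_blocks (sym_diff K L) i j"
  by (rule nth_equalityI) auto

lemma swap_blocks_empty [simp]: "swap_blocks {} i j = i"
  by (rule nth_equalityI) auto

lemma swap_blocks_complement:
  "length i = d \<Longrightarrow> length j = d \<Longrightarrow> swap_blocks ({..<d} - K) i j = swap_blocks K j i"
  by (rule nth_equalityI) auto

lemma ptrans_ptrans:
  "length i = length j \<Longrightarrow> ptrans K (ptrans L N) i j = ptrans (sym_diff K L) N i j"
  by (simp add: ptrans_conv_swap_blocks swap_blocks_swap_blocks Un_commute)

lemma fully_symmetric_ptrans:
  assumes "fully_symmetric n d S" "K \<subseteq> {..<d}" "i \<in> idx n d" "j \<in> idx n d"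
  shows "ptrans K S i j = S i j"
proof -
  have "finite K" using assms(2) finite_subset by blast
  from this assms(2-4) show ?thesis
  proof (induction K arbitrary: i j rule: finite_induct)
    case empty
    then show ?case by (simp add: ptrans_conv_swap_blocks)
  next
    case (insert k K)
    have "ptrans (insert k K) S i j = ptrans {k} (ptrans K S) i j"
      using insert.hyps insert.prems ptrans_ptrans[of i j "{k}" K S]
      by (simp add: length_idx insert_Diff_if Un_commute)
    also have "\<dots> = S (swap_blocks {k} i j) (swap_blocks {k} j i)"
      using insert by (simp add: ptrans_conv_swap_blocks swap_blocks_in_idx)
    also have "\<dots> = S i j"
      using assms(1) insert.prems unfolding fully_symmetric_def ptrans_conv_swap_blocks by blast
    finally show ?case .
  qed
qed

definition monomial_exp :: "nat \<Rightarrow> nat list \<Rightarrow> nat list \<Rightarrow> (nat \<times> nat) \<Rightarrow>\<^sub>0 nat" where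
  "monomial_exp d i j = (\<Sum>k<d. Poly_Mapping.single (k, i ! k) 1 + Poly_Mapping.single (k, j ! k) 1)"

lemma prod_single:
  "finite S \<Longrightarrow> (\<Prod>x\<in>S. Poly_Mapping.single (e x) (c x :: 'a::comm_semiring_1)) =
     Poly_Mapping.single (\<Sum>x\<in>S. e x) (\<Prod>x\<in>S. c x)"
  by (induct S rule: finite_induct) (auto simp: mult_single)

lemma single_sum:
  "finite S \<Longrightarrow> Poly_Mapping.single e (\<Sum>x\<in>S. f x) = (\<Sum>x\<in>S. Poly_Mapping.single e (f x))"
  by (induct S rule: finite_induct) (auto simp: single_add)

lemma QM_eq_sum_single:
  "QM n d N = (\<Sum>i\<in>idx n d. \<Sum>j\<in>idx n d. Poly_Mapping.single (monomial_exp d i j) (N i j))"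
proof -
  have "(\<Prod>k<d. Var k (i ! k) * Var k (j ! k)) = Poly_Mapping.single (monomial_exp d i j) (1::'a)"
    for i j
    by (simp add: Var_def mult_single prod_single monomial_exp_def)
  then show ?thesis by (simp add: QM_def Const_def mult_single)
qed

lemma lookup_monomial_exp:
  "Poly_Mapping.lookup (monomial_exp d i j) (k, x) =
     (if k < d then (if i ! k = x then 1 else 0) + (if j ! k = x then 1 else 0) else 0)"
proof -
  have "Poly_Mapping.lookup (monomial_exp d i j) (k, x) = (\<Sum>k'<d.
      (if k' = k then (if i ! k = x then 1 else 0) else 0) +
      (if k' = k then (if j ! k = x then 1 else 0) else 0))"
    unfolding monomial_exp_def lookup_sum lookup_add lookup_single
    by (rule sum.cong) (auto simp: when_def)
  then show ?thesis by (simp add: sum.distrib)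
qed

lemma monomial_exp_swap_blocks:
  "length i = d \<Longrightarrow> length j = d \<Longrightarrow>
     monomial_exp d (swap_blocks K i j) (swap_blocks K j i) = monomial_exp d i j"
  unfolding monomial_exp_def by (rule sum.cong) (auto simp: add.commute)

lemma QM_ptrans: "QM n d (ptrans K N) = QM n d N"
proof -
  let ?s = "\<lambda>(i, j). (swap_blocks K i j, swap_blocks K j i)"
  have "QM n d (ptrans K N) = (\<Sum>(i, j)\<in>idx n d \<times> idx n d.
      Poly_Mapping.single (monomial_exp d i j) (N (swap_blocks K i j) (swap_blocks K j i)))"
    by (simp add: QM_eq_sum_single ptrans_conv_swap_blocks sum.cartesian_product)
  also have "\<dots> = (\<Sum>(i, j)\<in>idx n d \<times> idx n d. Poly_Mapping.single (monomial_exp d i j) (N i j))"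
    by (rule sum.reindex_bij_witness[of _ ?s ?s])
      (auto simp: swap_blocks_swap_blocks swap_blocks_in_idx monomial_exp_swap_blocks length_idx)
  finally show ?thesis by (simp add: QM_eq_sum_single sum.cartesian_product)
qed

lemma QM_diff: "QM n d (\<lambda>i j. A i j - B i j) = QM n d A - QM n d B"
  by (simp add: QM_eq_sum_single single_diff sum_subtractf)

lemma QM_cmult: "QM n d (\<lambda>i j. c * A i j) = Const c * QM n d A"
  by (simp add: QM_eq_sum_single Const_def sum_distrib_left mult_single)

lemma QM_sum: "finite S \<Longrightarrow> QM n d (\<lambda>i j. \<Sum>x\<in>S. F x i j) = (\<Sum>x\<in>S. QM n d (F x))"
  by (simp add: QM_eq_sum_single single_sum sum.swap[of _ S])

lemma Const_mult: "Const (a * b) = Const a * Const b"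
  by (simp add: Const_def mult_single)

lemma multilinear_form_square:
  "(\<Sum>i\<in>idx n d. Const (c i) * (\<Prod>k<d. Var k (i ! k)))\<^sup>2 = QM n d (\<lambda>i j. c i * c j)"
proof -
  have "Const (c i) * (\<Prod>k<d. Var k (i ! k)) * (Const (c j) * (\<Prod>k<d. Var k (j ! k))) =
      Const (c i * c j) * (\<Prod>k<d. Var k (i ! k) * Var k (j ! k))" for i j
    by (simp add: Const_mult prod.distrib mult_ac)
  then show ?thesis by (simp add: QM_def power2_eq_square sum_product)
qed

lemma same_pair_if_same_counts:
  fixes a b x y :: nat
  assumes "\<And>z. (if a = z then 1 else 0) + (if b = z then 1 else 0) =
     ((if x = z then 1 else 0) + (if y = z then 1 else 0) :: nat)"
  shows "(a = x \<and> b = y) \<or> (a = y \<and> b = x)"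
proof (cases "a = x")
  case True
  then show ?thesis using assms[of b] by (simp split: if_split_asm)
next
  case False
  then show ?thesis using assms[of a] assms[of x] by (simp split: if_split_asm)
qed

lemma monomial_exp_eq_imp_nth:
  assumes "monomial_exp d a b = monomial_exp d i j" "k < d"
  shows "(a ! k = i ! k \<and> b ! k = j ! k) \<or> (a ! k = j ! k \<and> b ! k = i ! k)"
proof (rule same_pair_if_same_counts)
  fix x
  show "(if a ! k = x then 1 else 0) + (if b ! k = x then 1 else 0) =
      ((if i ! k = x then 1 else 0) + (if j ! k = x then 1 else 0) :: nat)"
    using arg_cong[OF assms(1), of "\<lambda>p. Poly_Mapping.lookup p (k, x)"] assms(2)
    by (simp only: lookup_monomial_exp if_True)
qed

lemma monomial_exp_fibre:
  assumes i: "i \<in> idx n d" and j: "j \<in> idx n d"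
  shows "{(a, b) \<in> idx n d \<times> idx n d. monomial_exp d a b = monomial_exp d i j} =
     (\<lambda>K. (swap_blocks K i j, swap_blocks K j i)) ` Pow {k. k < d \<and> i ! k \<noteq> j ! k}"
    (is "?F = ?G")
proof
  show "?G \<subseteq> ?F"
    using i j by (auto simp: swap_blocks_in_idx monomial_exp_swap_blocks length_idx)
next
  show "?F \<subseteq> ?G"
  proof clarify
    fix a b assume a: "a \<in> idx n d" and b: "b \<in> idx n d"
      and eq: "monomial_exp d a b = monomial_exp d i j"
    define K where "K = {k. k < d \<and> i ! k \<noteq> j ! k \<and> a ! k \<noteq> i ! k}"
    have "a ! k = swap_blocks K i j ! k \<and> b ! k = swap_blocks K j i ! k" if "k < d" for k
      using monomial_exp_eq_imp_nth[OF eq that] that i j by (auto simp: K_def length_idx)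
    then have "a = swap_blocks K i j" "b = swap_blocks K j i"
      using a b i j by (auto intro!: nth_equalityI simp: length_idx)
    then show "(a, b) \<in> ?G" by (auto simp: K_def)
  qed
qed

lemma inj_on_swap_blocks:
  assumes "length i = d" "length j = d"
  shows "inj_on (\<lambda>K. (swap_blocks K i j, swap_blocks K j i)) (Pow {k. k < d \<and> i ! k \<noteq> j ! k})"
proof (rule inj_onI, rule set_eqI)
  fix K L k
  assume K: "K \<in> Pow {k. k < d \<and> i ! k \<noteq> j ! k}" and L: "L \<in> Pow {k. k < d \<and> i ! k \<noteq> j ! k}"
    and eq: "(swap_blocks K i j, swap_blocks K j i) = (swap_blocks L i j, swap_blocks L j i)"
  have "k < d \<Longrightarrow> (if k \<in> K then j ! k else i ! k) = (if k \<in> L then j ! k else i ! k)"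
    using arg_cong[OF eq, of "\<lambda>p. fst p ! k"] assms by simp
  then show "k \<in> K \<longleftrightarrow> k \<in> L"
    using K L by (auto split: if_splits)
qed

lemma lookup_QM_fully_symmetric:
  fixes S :: "'a::comm_ring_1 tmat"
  assumes S: "fully_symmetric n d S" and i: "i \<in> idx n d" and j: "j \<in> idx n d"
  shows "Poly_Mapping.lookup (QM n d S) (monomial_exp d i j) =
    2 ^ card {k. k < d \<and> i ! k \<noteq> j ! k} * S i j"
proof -
  let ?D = "{k. k < d \<and> i ! k \<noteq> j ! k}"
  let ?F = "{(a, b) \<in> idx n d \<times> idx n d. monomial_exp d a b = monomial_exp d i j}"
  have "Poly_Mapping.lookup (QM n d S) (monomial_exp d i j) = (\<Sum>(a, b)\<in>idx n d \<times> idx n d.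
      if monomial_exp d a b = monomial_exp d i j then S a b else 0)"
    by (auto simp: QM_eq_sum_single lookup_sum lookup_single when_def sum.cartesian_product
        intro!: sum.cong)
  also have "\<dots> = (\<Sum>(a, b)\<in>?F. S a b)"
    by (rule sum.mono_neutral_cong_right) (auto simp: finite_idx split: if_splits)
  also have "\<dots> = (\<Sum>K\<in>Pow ?D. ptrans K S i j)"
    unfolding monomial_exp_fibre[OF i j]
    by (simp add: sum.reindex[OF inj_on_swap_blocks[OF length_idx[OF i] length_idx[OF j]]]
        ptrans_conv_swap_blocks)
  also have "\<dots> = (\<Sum>K\<in>Pow ?D. S i j)"
    by (rule sum.cong) (use fully_symmetric_ptrans[OF S _ i j] in auto)
  finally show ?thesis by (simp add: card_Pow)
qed

lemma fully_symmetric_QM_eq_0: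
  fixes S :: "'a::field tmat"
  assumes "(2::'a) \<noteq> 0" "fully_symmetric n d S" "QM n d S = 0" "i \<in> idx n d" "j \<in> idx n d"
  shows "S i j = 0"
  using lookup_QM_fully_symmetric[OF assms(2,4,5)] assms(1,3) by simp

lemma fully_symmetric_sum_ptrans:
  "fully_symmetric n d (\<lambda>i j. \<Sum>K\<in>Pow {..<d}. ptrans K N i j)"
  unfolding fully_symmetric_def
proof (intro allI impI ballI)
  fix k i j assume k: "k < d" and i: "i \<in> idx n d" and j: "j \<in> idx n d"
  let ?flip = "sym_diff {k}"
  have "ptrans {k} (\<lambda>i j. \<Sum>K\<in>Pow {..<d}. ptrans K N i j) i j =
      (\<Sum>K\<in>Pow {..<d}. ptrans {k} (ptrans K N) i j)"
    by (simp add: ptrans_conv_swap_blocks)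
  also have "\<dots> = (\<Sum>K\<in>Pow {..<d}. ptrans (?flip K) N i j)"
    using i j by (simp add: ptrans_ptrans length_idx)
  also have "\<dots> = (\<Sum>K\<in>Pow {..<d}. ptrans K N i j)"
    by (rule sum.reindex_bij_witness[of _ ?flip ?flip]) (use k in auto)
  finally show "ptrans {k} (\<lambda>i j. \<Sum>K\<in>Pow {..<d}. ptrans K N i j) i j =
      (\<Sum>K\<in>Pow {..<d}. ptrans K N i j)" .
qed

lemma fully_symmetric_eq_sum_ptrans:
  fixes M N :: "'a::field tmat"
  assumes two: "(2::'a) \<noteq> 0" and M: "fully_symmetric n d M" and QM: "QM n d M = QM n d N"
    and i: "i \<in> idx n d" and j: "j \<in> idx n d"
  shows "of_nat (2 ^ d) * M i j = (\<Sum>K\<in>Pow {..<d}. ptrans K N i j)"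
proof -
  define S where "S = (\<lambda>i j. of_nat (2 ^ d) * M i j - (\<Sum>K\<in>Pow {..<d}. ptrans K N i j))"
  have "fully_symmetric n d S"
    using M fully_symmetric_sum_ptrans[of n d N]
    by (simp add: fully_symmetric_def S_def ptrans_conv_swap_blocks)
  moreover have "QM n d S = 0"
  proof -
    have "QM n d S = Const (of_nat (2 ^ d)) * QM n d M - (\<Sum>K\<in>Pow {..<d}. QM n d (ptrans K N))"
      by (simp add: S_def QM_diff QM_cmult QM_sum)
    also have "\<dots> = 0"
      by (simp only: QM_ptrans QM sum_constant Const_def single_of_nat) (simp add: card_Pow)
    finally show ?thesis .
  qed
  ultimately have "S i j = 0"
    using fully_symmetric_QM_eq_0[OF two _ _ i j] by blast
  then show ?thesis by (simp add: S_def)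
qed

lemma sum_Pow_ptrans_symmetric:
  fixes C :: "'a::comm_ring_1 tmat"
  assumes C: "\<And>i j. C i j = C j i" and i: "length i = d" and j: "length j = d" and d: "d \<ge> 1"
  shows "(\<Sum>K\<in>Pow {..<d}. ptrans K C i j) = 2 * (\<Sum>K\<in>Pow {1..<d}. ptrans K C i j)"
proof -
  let ?A = "{1..<d}"
  have inj: "inj_on (insert 0) (Pow ?A)"
  proof (rule inj_onI)
    fix X Y assume X: "X \<in> Pow ?A" and Y: "Y \<in> Pow ?A" and eq: "insert 0 X = insert 0 Y"
    have "0 \<notin> X" "0 \<notin> Y" using X Y by auto
    from this eq show "X = Y" by (rule insert_ident[THEN iffD1])
  qed
  have "0 \<notin> ?A" by simp
  then have disj: "Pow ?A \<inter> insert 0 ` Pow ?A = {}" by blast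
  have "{..<d} = insert 0 ?A" using d by auto
  then have "(\<Sum>K\<in>Pow {..<d}. ptrans K C i j) = (\<Sum>K\<in>Pow ?A \<union> insert 0 ` Pow ?A. ptrans K C i j)"
    by (simp only: Pow_insert)
  also have "\<dots> = (\<Sum>K\<in>Pow ?A. ptrans K C i j) + (\<Sum>K\<in>insert 0 ` Pow ?A. ptrans K C i j)"
    by (rule sum.union_disjoint[OF _ _ disj]) simp_all
  also have "(\<Sum>K\<in>insert 0 ` Pow ?A. ptrans K C i j) = (\<Sum>K\<in>Pow ?A. ptrans (insert 0 K) C i j)"
    using inj by (simp add: sum.reindex)
  also have "(\<Sum>K\<in>Pow ?A. ptrans (insert 0 K) C i j) = (\<Sum>K\<in>Pow ?A. ptrans (?A - K) C i j)"
  proof (rule sum.cong)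
    fix K assume "K \<in> Pow ?A"
    then have "?A - K = {..<d} - insert 0 K" by auto
    then have "ptrans (?A - K) C i j = C (swap_blocks (insert 0 K) j i) (swap_blocks (insert 0 K) i j)"
      by (simp only: ptrans_conv_swap_blocks swap_blocks_complement[OF i j] swap_blocks_complement[OF j i])
    also have "\<dots> = ptrans (insert 0 K) C i j"
      unfolding ptrans_conv_swap_blocks by (rule C)
    finally show "ptrans (insert 0 K) C i j = ptrans (?A - K) C i j" ..
  qed simp
  also have "\<dots> = (\<Sum>K\<in>Pow ?A. ptrans K C i j)"
    by (rule sum.reindex_bij_witness[of _ "\<lambda>K. ?A - K" "\<lambda>K. ?A - K"]) auto
  finally show ?thesis unfolding mult_2 .
qed

lemma mrank_cong:
  assumes "\<And>i j. i \<in> idx n d \<Longrightarrow> j \<in> idx n d \<Longrightarrow> M i j = N i j"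
  shows "mrank n d M = mrank n d N"
proof -
  have "(\<lambda>j i. if i \<in> idx n d then M i j else 0) ` idx n d =
      (\<lambda>j i. if i \<in> idx n d then N i j else 0) ` idx n d"
    using assms by (auto simp: fun_eq_iff intro!: image_cong)
  then show ?thesis by (simp only: mrank_def)
qed

lemma mrank_outer_product:
  fixes u v :: "nat list \<Rightarrow> 'a::field"
  assumes "i0 \<in> idx n d" "u i0 \<noteq> 0" "j0 \<in> idx n d" "v j0 \<noteq> 0"
  shows "mrank n d (\<lambda>i j. u i * v j) = 1"
proof -
  interpret V: vector_space "fscale :: 'a \<Rightarrow> (nat list \<Rightarrow> 'a) \<Rightarrow> _"
    by (rule vector_space_fscale)
  define w where "w i = (if i \<in> idx n d then u i else 0)" for i
  have cols: "(\<lambda>j i. if i \<in> idx n d then u i * v j else 0) ` idx n d = (\<lambda>j. fscale (v j) w) ` idx n d"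
    by (auto simp: w_def fscale_def fun_eq_iff mult.commute)
  have "fscale (v j) w \<in> V.span {fscale (v j0) w}" for j
  proof -
    have "fscale (v j) w = fscale (v j / v j0) (fscale (v j0) w)"
      using assms(4) by (simp add: fscale_def)
    then show ?thesis by (metis V.span_scale V.span_base singletonI)
  qed
  moreover have "fscale (v j0) w \<noteq> 0"
    using assms by (auto simp: w_def fscale_def fun_eq_iff)
  ultimately have "V.dim ((\<lambda>j. fscale (v j) w) ` idx n d) = 1"
    using assms(3) by (intro V.dim_unique[of "{fscale (v j0) w}"]) auto
  then show ?thesis by (simp add: mrank_def cols)
qed

lemma PT_basic_or_zero_ptrans_outer_product:
  fixes u v :: "nat list \<Rightarrow> 'a::field"
  assumes K: "K \<subseteq> {..<d}"
  shows "PT_basic n d (ptrans K (\<lambda>i j. u i * v j)) \<or>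
    (\<forall>i\<in>idx n d. \<forall>j\<in>idx n d. ptrans K (\<lambda>i j. u i * v j) i j = 0)"
proof (cases "(\<exists>i0\<in>idx n d. u i0 \<noteq> 0) \<and> (\<exists>j0\<in>idx n d. v j0 \<noteq> 0)")
  case True
  then have "mrank n d (\<lambda>i j. u i * v j) = 1"
    using mrank_outer_product by blast
  moreover have "mrank n d (ptrans K (ptrans K (\<lambda>i j. u i * v j))) = mrank n d (\<lambda>i j. u i * v j)"
    by (rule mrank_cong) (simp add: ptrans_conv_swap_blocks swap_blocks_swap_blocks length_idx)
  ultimately show ?thesis
    using K unfolding PT_basic_def by auto
next
  case False
  then show ?thesis by (auto simp: ptrans_conv_swap_blocks swap_blocks_in_idx)
qed

lemma PT_rank_le_card:
  fixes B :: "'b \<Rightarrow> 'a::field tmat"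
  assumes fin: "finite I"
    and B: "\<And>x. x \<in> I \<Longrightarrow> PT_basic n d (B x) \<or> (\<forall>i\<in>idx n d. \<forall>j\<in>idx n d. B x i j = 0)"
    and M: "\<And>i j. i \<in> idx n d \<Longrightarrow> j \<in> idx n d \<Longrightarrow> M i j = (\<Sum>x\<in>I. B x i j)"
  shows "PT_rank n d M \<le> enat (card I)"
proof -
  define J where "J = {x \<in> I. PT_basic n d (B x)}"
  have "finite J" using fin by (simp add: J_def)
  then obtain h where h: "bij_betw h {..<card J} J"
    using bij_betw_from_nat_into_finite by blast
  have "M i j = (\<Sum>t<card J. B (h t) i j)" if "i \<in> idx n d" "j \<in> idx n d" for i j
  proof -
    have "M i j = (\<Sum>x\<in>J. B x i j)"
      unfolding M[OF that] using B that
      by (intro sum.mono_neutral_right[OF fin]) (auto simp: J_def)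
    also have "\<dots> = (\<Sum>t<card J. B (h t) i j)"
      by (rule sum.reindex_bij_betw[OF h, symmetric])
    finally show ?thesis .
  qed
  moreover have "\<forall>t<card J. PT_basic n d (B (h t))"
    using h by (auto simp: bij_betw_def J_def)
  ultimately have "enat (card J) \<in> {enat r | r. \<exists>B :: nat \<Rightarrow> 'a tmat.
      (\<forall>t<r. PT_basic n d (B t)) \<and> (\<forall>i\<in>idx n d. \<forall>j\<in>idx n d. M i j = (\<Sum>t<r. B t i j))}"
    by (auto intro!: exI[of _ "\<lambda>t. B (h t)"])
  then have "PT_rank n d M \<le> enat (card J)"
    unfolding PT_rank_def by (rule Inf_lower)
  also have "card J \<le> card I"
    using fin by (auto simp: J_def intro: card_mono)
  finally show ?thesis by simp
qed

lemma fully_symmetric_eq_sum_ptrans_outer_products: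
  fixes M :: "'a::field tmat" and c :: "nat \<Rightarrow> nat list \<Rightarrow> 'a"
  assumes two: "(2::'a) \<noteq> 0" and d: "d \<ge> 1" and M: "fully_symmetric n d M"
    and QM: "QM n d M = QM n d (\<lambda>i j. \<Sum>t<s. c t i * c t j)"
    and i: "i \<in> idx n d" and j: "j \<in> idx n d"
  shows "M i j = (\<Sum>(t, K)\<in>{..<s} \<times> Pow {1..<d}.
    ptrans K (\<lambda>i j. (inverse (2 ^ (d - 1)) * c t i) * c t j) i j)"
proof -
  define C where "C t = (\<lambda>i j. c t i * c t j)" for t
  define q :: 'a where "q = 2 ^ (d - 1)"
  have two_pow: "(2::'a) ^ d = 2 * q"
    using d by (cases d) (simp_all add: q_def)
  have "2 * q * M i j = (\<Sum>K\<in>Pow {..<d}. \<Sum>t<s. ptrans K (C t) i j)"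
    using fully_symmetric_eq_sum_ptrans[OF two M QM i j]
    by (simp add: two_pow C_def ptrans_conv_swap_blocks)
  also have "\<dots> = (\<Sum>t<s. \<Sum>K\<in>Pow {..<d}. ptrans K (C t) i j)"
    by (rule sum.swap)
  also have "\<dots> = (\<Sum>t<s. 2 * (\<Sum>K\<in>Pow {1..<d}. ptrans K (C t) i j))"
    using i j d by (intro sum.cong refl sum_Pow_ptrans_symmetric) (simp_all add: C_def length_idx)
  also have "\<dots> = 2 * (\<Sum>(t, K)\<in>{..<s} \<times> Pow {1..<d}. ptrans K (C t) i j)"
    by (simp add: sum.cartesian_product sum_distrib_left case_prod_beta)
  finally have "q * M i j = (\<Sum>(t, K)\<in>{..<s} \<times> Pow {1..<d}. ptrans K (C t) i j)"
    using two by (simp add: mult.assoc)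
  moreover have "q \<noteq> 0"
    using two by (simp add: q_def)
  ultimately have "M i j = inverse q * (\<Sum>(t, K)\<in>{..<s} \<times> Pow {1..<d}. ptrans K (C t) i j)"
    by (simp add: field_simps)
  then show ?thesis
    by (simp add: sum_distrib_left q_def C_def ptrans_conv_swap_blocks case_prod_beta mult.assoc)
qed

lemma PT_rank_le_of_sum_squares:
  fixes M :: "'a::field tmat"
  assumes two: "(2::'a) \<noteq> 0" and d: "d \<ge> 1" and M: "fully_symmetric n d M"
    and g: "\<forall>t<s. multilinear_form n d (g t)" and sos: "QM n d M = (\<Sum>t<s. (g t)\<^sup>2)"
  shows "PT_rank n d M \<le> enat (2 ^ (d - 1) * s)"
proof -
  have "\<forall>t\<in>{..<s}. \<exists>ct. g t = (\<Sum>i\<in>idx n d. Const (ct i) * (\<Prod>k<d. Var k (i ! k)))"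
    using g by (simp add: multilinear_form_def)
  from bchoice[OF this] obtain c
    where c: "\<forall>t\<in>{..<s}. g t = (\<Sum>i\<in>idx n d. Const (c t i) * (\<Prod>k<d. Var k (i ! k)))" ..
  define B where "B = (\<lambda>(t, K). ptrans K (\<lambda>i j. (inverse (2 ^ (d - 1)) * c t i) * c t j))"
  have "QM n d M = (\<Sum>t<s. QM n d (\<lambda>i j. c t i * c t j))"
    unfolding sos by (rule sum.cong) (simp_all add: c multilinear_form_square)
  then have "QM n d M = QM n d (\<lambda>i j. \<Sum>t<s. c t i * c t j)"
    by (simp add: QM_sum)
  then have "M i j = (\<Sum>x\<in>{..<s} \<times> Pow {1..<d}. B x i j)" if "i \<in> idx n d" "j \<in> idx n d" for i j
    using fully_symmetric_eq_sum_ptrans_outer_products[OF two d M _ that] by (simp add: B_def split_def)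
  moreover have "PT_basic n d (B x) \<or> (\<forall>i\<in>idx n d. \<forall>j\<in>idx n d. B x i j = 0)"
    if "x \<in> {..<s} \<times> Pow {1..<d}" for x
    using that by (auto simp: B_def intro!: PT_basic_or_zero_ptrans_outer_product)
  ultimately have "PT_rank n d M \<le> enat (card ({..<s} \<times> Pow {1..<d}))"
    by (intro PT_rank_le_card) auto
  then show ?thesis by (simp add: card_cartesian_product card_Pow mult.commute)
qed

lemma two_neq_zero_if_CHAR_neq_2:
  assumes "CHAR('a::{semiring_1, zero_neq_one}) \<noteq> 2"
  shows "(2::'a) \<noteq> 0"
proof
  assume "(2::'a) = 0"
  then have "of_nat 2 = (0::'a)" by simp
  then have "CHAR('a) dvd 2" by (simp only: of_nat_eq_0_iff_char_dvd)
  then have "CHAR('a) \<in> {1, 2}"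
    using dvd_imp_le[of "CHAR('a)" 2] by (cases "CHAR('a)") (auto simp: numeral_2_eq_2 dvd_def)
  then show False using assms by simp
qed

lemma le_mult_Inf_enat:
  fixes x c :: enat
  assumes "c \<noteq> 0" and "\<And>a. a \<in> A \<Longrightarrow> x \<le> c * a"
  shows "x \<le> c * Inf A"
proof (cases "A = {}")
  case True
  then have "c * Inf A = \<infinity>"
    using assms(1) by (simp add: top_enat_def imult_is_infinity)
  then show ?thesis by simp
next
  case False
  then have "Inf A \<in> A" unfolding Inf_enat_def by (auto intro: LeastI)
  then show ?thesis by (rule assms(2))
qed

theorem lemma3p15:
  fixes M :: "'a::field tmat" and n d :: nat
  assumes "CHAR('a) \<noteq> 2"
    and "d \<ge> 1"
    and "fully_symmetric n d M"
  shows "PT_rank n d M \<le> enat (2 ^ (d - 1)) * SoS n d (QM n d M)"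
  unfolding SoS_def
proof (rule le_mult_Inf_enat)
  have two: "(2::'a) \<noteq> 0"
    using assms(1) by (rule two_neq_zero_if_CHAR_neq_2)
  fix x assume "x \<in> {enat s |s. \<exists>g. (\<forall>t<s. multilinear_form n d (g t)) \<and> QM n d M = (\<Sum>t<s. (g t)\<^sup>2)}"
  then show "PT_rank n d M \<le> enat (2 ^ (d - 1)) * x"
    using PT_rank_le_of_sum_squares[OF two assms(2,3)] by auto
qed (simp add: zero_enat_def)

end
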